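(* Let $g\ge 4$ be an even integer. Let $H_g$ be the mixed graph with vertex set $\mathbb{Z}_g\times\{0,1,\dots,g/2-1\}$, edges $\{(i,j),(i+1,j)\}$ for all $i\in\mathbb{Z}_g$ and $0\le j\le g/2-1$, arcs $((i,j),(i,j+1))$ for all $i\in\mathbb{Z}_g$ and $0\le j\le g/2-2$, and arcs $((i,g/2-1),(i+g/2,0))$ for all $i\in\mathbb{Z}_g$ (first coordinates taken modulo $g$). (Equivalently, $H_g$ is the Cartesian product of the undirected cycle $C_g$ with the directed path on $g/2$ vertices, together with the arcs $((i,g/2-1),(i+g/2,0))$.) Then $H_g$ is a $[1,2;g]$-mixed graph of order $\frac{g^2}{2}$.
   Context: A mixed graph is a finite simple graph that may contain both edges and arcs. A $[z,r;g]$-mixed graph is a mixed graph in which every vertex is the tail of exactly $z$ arcs, the head of exactly $z$ arcs, and is incident with exactly $r$ edges, and whose girth is $g$. Walks traverse edges in either direction and arcs only in their direction; a cycle is a closed walk with no repeated vertices (other than start = end) and no repeated edge or arc; the girth is the length of a shortest cycle. *)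

theory Defs
  imports Main
begin

definition mixed_graph :: "'a set \<Rightarrow> 'a set set \<Rightarrow> ('a \<times> 'a) set \<Rightarrow> bool" where
  "mixed_graph V E A \<longleftrightarrow> finite V
     \<and> (\<forall>e\<in>E. e \<subseteq> V \<and> card e = 2)
     \<and> (\<forall>(u,v)\<in>A. u \<in> V \<and> v \<in> V \<and> u \<noteq> v)"

definition mixed_regular :: "'a set \<Rightarrow> 'a set set \<Rightarrow> ('a \<times> 'a) set \<Rightarrow> nat \<Rightarrow> nat \<Rightarrow> bool" where
  "mixed_regular V E A z r \<longleftrightarrow> (\<forall>v\<in>V.
       card {w. (v, w) \<in> A} = z \<and> card {w. (w, v) \<in> A} = z \<and> card {e\<in>E. v \<in> e} = r)"

datatype 'a step = EdgeStep "'a set" | ArcStep "'a \<times> 'a"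

fun step_ok :: "'a set set \<Rightarrow> ('a \<times> 'a) set \<Rightarrow> 'a step \<Rightarrow> 'a \<Rightarrow> 'a \<Rightarrow> bool" where
  "step_ok E A (EdgeStep e) u v \<longleftrightarrow> e \<in> E \<and> e = {u, v}"
| "step_ok E A (ArcStep a) u v \<longleftrightarrow> a \<in> A \<and> a = (u, v)"

definition is_cycle :: "'a set \<Rightarrow> 'a set set \<Rightarrow> ('a \<times> 'a) set \<Rightarrow> 'a list \<Rightarrow> 'a step list \<Rightarrow> bool" where
  "is_cycle V E A vs ss \<longleftrightarrow> vs \<noteq> [] \<and> length ss = length vs \<and> distinct vs \<and> distinct ss
     \<and> set vs \<subseteq> V
     \<and> (\<forall>i < length vs. step_ok E A (ss ! i) (vs ! i) (vs ! ((i + 1) mod length vs)))"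

definition has_cycle_of_length :: "'a set \<Rightarrow> 'a set set \<Rightarrow> ('a \<times> 'a) set \<Rightarrow> nat \<Rightarrow> bool" where
  "has_cycle_of_length V E A k \<longleftrightarrow> (\<exists>vs ss. is_cycle V E A vs ss \<and> length vs = k)"

definition has_girth :: "'a set \<Rightarrow> 'a set set \<Rightarrow> ('a \<times> 'a) set \<Rightarrow> nat \<Rightarrow> bool" where
  "has_girth V E A g \<longleftrightarrow> has_cycle_of_length V E A g \<and> (\<forall>k. has_cycle_of_length V E A k \<longrightarrow> g \<le> k)"

definition mixed_zrg :: "'a set \<Rightarrow> 'a set set \<Rightarrow> ('a \<times> 'a) set \<Rightarrow> nat \<Rightarrow> nat \<Rightarrow> nat \<Rightarrow> bool" where
  "mixed_zrg V E A z r g \<longleftrightarrow> mixed_graph V E A \<and> mixed_regular V E A z r \<and> has_girth V E A g"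

definition Hg_V :: "nat \<Rightarrow> (nat \<times> nat) set" where
  "Hg_V g = {(i, j). i < g \<and> j < g div 2}"

definition Hg_E :: "nat \<Rightarrow> (nat \<times> nat) set set" where
  "Hg_E g = {{(i, j), ((i + 1) mod g, j)} | i j. i < g \<and> j < g div 2}"

definition Hg_A :: "nat \<Rightarrow> ((nat \<times> nat) \<times> (nat \<times> nat)) set" where
  "Hg_A g = {((i, j), (i, j + 1)) | i j. i < g \<and> j + 1 < g div 2}
          \<union> {((i, g div 2 - 1), ((i + g div 2) mod g, 0)) | i. i < g}"

end

theory Submission
  imports Defs "HOL-Number_Theory.Cong"
begin

text \<open>
  With \<open>h = g/2\<close>, the edges of \<open>H\<^sub>g\<close> are the pairs \<open>{a, \<rho> a}\<close> for the row rotation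
  \<open>\<rho>(i, j) = (i + 1, j)\<close>, and the arcs are the pairs \<open>(a, \<nu> a)\<close> for the permutation \<open>\<nu>\<close> that
  climbs a column and wraps \<open>(i, h - 1)\<close> to \<open>(i + h, 0)\<close>. Since \<open>\<nu>\<close> is a permutation, every vertex
  has in- and out-degree 1, and since \<open>\<rho>\<close> is a permutation without cycles of length \<open>\<le> 2\<close>, every
  vertex lies on two edges. Row 0 is a cycle of length \<open>g\<close>.

  For the girth, consider the diagonal coordinates \<open>i + j\<close> and \<open>i - j\<close> modulo \<open>g\<close>: both change by
  the same \<open>\<plusminus>1\<close> along an edge, while along an arc \<open>i + j\<close> increases and \<open>i - j\<close> decreases by 1
  (for the wrap arc because \<open>2h = g\<close>). Around a cycle of length \<open>L < g\<close> the increments of each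
  coordinate sum to a multiple of \<open>g\<close> of absolute value \<open>\<le> L\<close>, hence to 0; subtracting the two
  sums shows that the cycle uses no arc. It then stays in one row and lifts to a closed walk in
  \<open>\<int>\<close> with unit steps through distinct points, which forces \<open>L = 2\<close>, i.e. a repeated edge.
\<close>

section \<open>Modular arithmetic and closed walks in \<open>\<int>\<close>\<close>

lemma bij_betw_add_mod:
  fixes k m :: nat
  assumes "0 < m"
  shows "bij_betw (\<lambda>a. (a + k) mod m) {..<m} {..<m}"
proof -
  have "inj_on (\<lambda>a. (a + k) mod m) {..<m}"
  proof (rule inj_onI)
    fix a b assume "a \<in> {..<m}" "b \<in> {..<m}" "(a + k) mod m = (b + k) mod m"
    then show "a = b"
      by (metis lessThan_iff mod_less cong_add_rcancel_nat cong_def)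
  qed
  moreover have "(\<lambda>a. (a + k) mod m) ` {..<m} \<subseteq> {..<m}"
    using assms by auto
  ultimately show ?thesis
    by (simp add: bij_betw_def endo_inj_surj)
qed

lemma add_mod_neq_self:
  fixes i k m :: nat
  assumes "0 < k" "k < m"
  shows "(i + k) mod m \<noteq> i mod m"
proof
  assume "(i + k) mod m = i mod m"
  then have "m dvd k"
    by (metis add_0_right cong_0_iff cong_add_lcancel_nat cong_def)
  then show False
    using assms by (auto dest: dvd_imp_le)
qed

lemma sum_lessThan_rotate:
  fixes f :: "nat \<Rightarrow> 'a::comm_monoid_add"
  assumes "0 < L"
  shows "(\<Sum>i<L. f ((i + 1) mod L)) = (\<Sum>i<L. f i)"
  using sum.reindex_bij_betw[OF bij_betw_add_mod[OF assms, of 1]] .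

lemma cong_sum_cyclic_increments:
  fixes f d :: "nat \<Rightarrow> int"
  assumes "\<And>i. i < L \<Longrightarrow> [f ((i + 1) mod L) = f i + d i] (mod m)"
  shows "[(\<Sum>i<L. d i) = 0] (mod m)"
proof (cases "L = 0")
  case False
  have "[(\<Sum>i<L. d i) = (\<Sum>i<L. f ((i + 1) mod L) - f i)] (mod m)"
  proof (rule cong_sum)
    fix i assume "i \<in> {..<L}"
    then have "[f ((i + 1) mod L) - f i = f i + d i - f i] (mod m)"
      using assms cong_diff cong_refl by blast
    then show "[d i = f ((i + 1) mod L) - f i] (mod m)"
      by (simp add: cong_sym)
  qed
  also have "(\<Sum>i<L. f ((i + 1) mod L) - f i) = 0"
    using sum_lessThan_rotate[of L f] False by (simp add: sum_subtractf)
  finally show ?thesis .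
qed simp

lemma cong_0_less_modulus_imp_eq_0:
  fixes s m :: int
  assumes "[s = 0] (mod m)" "\<bar>s\<bar> < m"
  shows "s = 0"
  using assms dvd_imp_le_int[of s m] by (auto simp: cong_0_iff)

lemma closed_unit_step_walk_inj_on_length:
  fixes x :: "nat \<Rightarrow> int"
  assumes "0 < L" and closed: "x L = x 0" and unit: "\<And>i. i < L \<Longrightarrow> \<bar>x (Suc i) - x i\<bar> = 1"
    and inj: "inj_on x {..<L}"
  shows "L = 2"
proof -
  obtain k where k: "k < L" "x k = Max (x ` {..<L})"
    using Max_in[of "x ` {..<L}"] \<open>0 < L\<close> by fastforce
  have top: "x i \<le> x k" if "i \<le> L" for i
    using k(2) closed that \<open>0 < L\<close> by (cases "i = L") auto
  have below: "x i = x k - 1" if "i \<le> L" "\<bar>x i - x k\<bar> = 1" for i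
    using top[OF that(1)] that(2) by linarith
  have after: "x (Suc k) = x k - 1"
    using below[of "Suc k"] unit[OF k(1)] k(1) by simp
  show ?thesis
  proof (cases k)
    case 0
    have "x (L - 1) = x 1"
      using below[of "L - 1"] unit[of "L - 1"] after closed \<open>0 < L\<close> 0 by (simp add: abs_minus_commute)
    moreover have "L \<noteq> 1"
      using after closed 0 by auto
    ultimately show ?thesis
      using inj_onD[OF inj, of "L - 1" 1] \<open>0 < L\<close> by fastforce
  next
    case (Suc p)
    have before: "x p = x k - 1"
      using below[of p] unit[of p] k(1) Suc by simp
    show ?thesis
    proof (cases "Suc k = L")
      case True
      then have "p = 0"
        using inj_onD[OF inj, of p 0] before after closed k(1) Suc by simp
      then show ?thesis using True Suc by simp
    next
      case False
      then show ?thesis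
        using inj_onD[OF inj, of p "Suc k"] before after k(1) Suc by simp
    qed
  qed
qed

section \<open>Mixed graphs built from permutations\<close>

lemma inj_on_edges_of_map:
  assumes "\<And>a. a \<in> A \<Longrightarrow> f (f a) \<noteq> a"
  shows "inj_on (\<lambda>a. {a, f a}) A"
proof (rule inj_onI)
  fix a b assume "a \<in> A" "b \<in> A" "{a, f a} = {b, f b}"
  then show "a = b"
    using assms[of b] by (auto simp: doubleton_eq_iff)
qed

lemma card_in_arcs_of_bij:
  assumes "bij_betw f A A" "w \<in> A"
  shows "card {x. (x, w) \<in> (\<lambda>a. (a, f a)) ` A} = 1"
proof -
  have "w \<in> f ` A"
    using assms bij_betw_imp_surj_on by fastforce
  then obtain v where v: "v \<in> A" "f v = w"
    by blast
  have "{x. (x, w) \<in> (\<lambda>a. (a, f a)) ` A} = {v}"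
    using v bij_betw_imp_inj_on[OF assms(1)] by (auto dest: inj_onD)
  then show ?thesis by simp
qed

lemma card_incident_edges_of_bij:
  assumes "bij_betw f A A" and no_2cycle: "\<And>a. a \<in> A \<Longrightarrow> f (f a) \<noteq> a" and "w \<in> A"
  shows "card {e \<in> (\<lambda>a. {a, f a}) ` A. w \<in> e} = 2"
proof -
  have "w \<in> f ` A"
    using assms bij_betw_imp_surj_on by fastforce
  then obtain v where v: "v \<in> A" "f v = w"
    by blast
  have "v \<noteq> w"
    using no_2cycle[OF \<open>w \<in> A\<close>] v by auto
  have "{e \<in> (\<lambda>a. {a, f a}) ` A. w \<in> e} = (\<lambda>a. {a, f a}) ` {w, v}"
    using v \<open>w \<in> A\<close> bij_betw_imp_inj_on[OF assms(1)] by (auto dest: inj_onD)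
  also have "card \<dots> = card {w, v}"
    using v \<open>w \<in> A\<close> by (intro card_image inj_on_subset[OF inj_on_edges_of_map[OF no_2cycle]]) auto
  finally show ?thesis
    using \<open>v \<noteq> w\<close> by simp
qed

lemma mixed_graph_of_maps:
  assumes "finite V" "f ` V \<subseteq> V" "\<rho> ` V \<subseteq> V"
    and "\<And>a. a \<in> V \<Longrightarrow> f a \<noteq> a" and no_2cycle: "\<And>a. a \<in> V \<Longrightarrow> \<rho> (\<rho> a) \<noteq> a"
  shows "mixed_graph V ((\<lambda>a. {a, \<rho> a}) ` V) ((\<lambda>a. (a, f a)) ` V)"
proof -
  have "\<rho> a \<noteq> a" if "a \<in> V" for a
    using no_2cycle[OF that] by auto
  with assms(1-4) show ?thesis
    by (fastforce simp: mixed_graph_def)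
qed

lemma mixed_regular_of_bijs:
  assumes "bij_betw f V V" "bij_betw \<rho> V V" "\<And>a. a \<in> V \<Longrightarrow> \<rho> (\<rho> a) \<noteq> a"
  shows "mixed_regular V ((\<lambda>a. {a, \<rho> a}) ` V) ((\<lambda>a. (a, f a)) ` V) 1 2"
proof -
  have "{x. (v, x) \<in> (\<lambda>a. (a, f a)) ` V} = {f v}" if "v \<in> V" for v
    using that by auto
  then show ?thesis
    using card_in_arcs_of_bij[OF assms(1)] card_incident_edges_of_bij[OF assms(2,3)]
    by (simp add: mixed_regular_def)
qed

section \<open>The graph \<open>H\<^sub>g\<close>\<close>

definition Hg_rot :: "nat \<Rightarrow> nat \<times> nat \<Rightarrow> nat \<times> nat" where
  "Hg_rot g = map_prod (\<lambda>i. (i + 1) mod g) id"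

definition Hg_next :: "nat \<Rightarrow> nat \<times> nat \<Rightarrow> nat \<times> nat" where
  "Hg_next g = (\<lambda>(i, j). if j + 1 < g div 2 then (i, j + 1) else ((i + g div 2) mod g, 0))"

lemma Hg_V_eq: "Hg_V g = {..<g} \<times> {..<g div 2}"
  by (auto simp: Hg_V_def)

lemma card_Hg_V: "card (Hg_V g) = g * (g div 2)"
  by (simp add: Hg_V_eq card_cartesian_product)

lemma Hg_E_eq: "Hg_E g = (\<lambda>a. {a, Hg_rot g a}) ` Hg_V g"
  unfolding Hg_E_def Hg_V_def Hg_rot_def by (auto simp: image_def)

lemma Hg_A_eq:
  assumes "2 \<le> g"
  shows "Hg_A g = (\<lambda>a. (a, Hg_next g a)) ` Hg_V g"
proof (intro equalityI subsetI)
  fix p assume "p \<in> Hg_A g"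
  then consider (up) i j where "p = ((i, j), (i, j + 1))" "i < g" "j + 1 < g div 2"
    | (wrap) i where "p = ((i, g div 2 - 1), ((i + g div 2) mod g, 0))" "i < g"
    by (auto simp: Hg_A_def)
  then show "p \<in> (\<lambda>a. (a, Hg_next g a)) ` Hg_V g"
  proof cases
    case up
    then show ?thesis
      by (auto simp: Hg_V_def Hg_next_def image_iff)
  next
    case wrap
    then show ?thesis
      using assms by (auto simp: Hg_V_def Hg_next_def image_iff intro!: exI[of _ "g div 2 - 1"])
  qed
next
  fix p assume "p \<in> (\<lambda>a. (a, Hg_next g a)) ` Hg_V g"
  then obtain i j where "p = ((i, j), Hg_next g (i, j))" "i < g" "j < g div 2"
    by (auto simp: Hg_V_def)
  then show "p \<in> Hg_A g"
    by (cases "j + 1 < g div 2") (auto simp: Hg_A_def Hg_next_def)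
qed

lemma bij_Hg_rot: "0 < g \<Longrightarrow> bij_betw (Hg_rot g) (Hg_V g) (Hg_V g)"
  unfolding Hg_V_eq Hg_rot_def by (intro bij_betw_map_prod bij_betw_add_mod bij_betw_id)

lemma Hg_rot_rot_neq:
  assumes "3 \<le> g" "a \<in> Hg_V g"
  shows "Hg_rot g (Hg_rot g a) \<noteq> a"
proof -
  have "((i + 1) mod g + 1) mod g \<noteq> i" if "i < g" for i
    using assms(1) that by (simp add: mod_Suc)
  then show ?thesis
    using assms(2) by (auto simp: Hg_rot_def Hg_V_def)
qed

lemma Hg_next_neq:
  assumes "2 \<le> g" "a \<in> Hg_V g"
  shows "Hg_next g a \<noteq> a"
proof -
  have "(i + g div 2) mod g \<noteq> i" if "i < g" for i
    using add_mod_neq_self[of "g div 2" g i] assms(1) that by simp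
  then show ?thesis
    using assms(2) by (auto simp: Hg_next_def Hg_V_def split: if_splits)
qed

lemma bij_Hg_next:
  assumes "2 \<le> g"
  shows "bij_betw (Hg_next g) (Hg_V g) (Hg_V g)"
proof -
  have shift_inj: "inj_on (\<lambda>i. (i + g div 2) mod g) {..<g}"
    using bij_betw_add_mod[of g "g div 2"] assms by (simp add: bij_betw_def)
  have "inj_on (Hg_next g) (Hg_V g)"
  proof (rule inj_onI)
    fix a b assume "a \<in> Hg_V g" "b \<in> Hg_V g" and eq: "Hg_next g a = Hg_next g b"
    then obtain i j i' j' where ab: "a = (i, j)" "b = (i', j')" "i < g" "i' < g" "j < g div 2" "j' < g div 2"
      by (auto simp: Hg_V_def)
    show "a = b"
    proof (cases "j + 1 < g div 2 \<and> j' + 1 < g div 2")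
      case True
      then show ?thesis using eq ab by (simp add: Hg_next_def)
    next
      case False
      then have "\<not> j + 1 < g div 2" "\<not> j' + 1 < g div 2"
        using eq ab by (auto simp: Hg_next_def split: if_splits)
      then show ?thesis
        using eq ab inj_onD[OF shift_inj, of i i'] by (simp add: Hg_next_def)
    qed
  qed
  moreover have "Hg_next g ` Hg_V g \<subseteq> Hg_V g"
    using assms by (auto simp: Hg_V_def Hg_next_def split: if_splits)
  ultimately show ?thesis
    by (simp add: bij_betw_def endo_inj_surj Hg_V_eq)
qed

section \<open>The girth of \<open>H\<^sub>g\<close>\<close>

definition diag_coord :: "int \<Rightarrow> nat \<times> nat \<Rightarrow> int" where
  "diag_coord \<sigma> = (\<lambda>(i, j). int i + \<sigma> * int j)"

lemma diag_coord_Hg_rot: "[diag_coord \<sigma> (Hg_rot g a) = diag_coord \<sigma> a + 1] (mod int g)"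
  by (cases a) (simp add: Hg_rot_def diag_coord_def cong_def of_nat_mod mod_simps algebra_simps)

lemma diag_coord_Hg_next:
  assumes "even g" "\<sigma> \<in> {1, -1}" "a \<in> Hg_V g"
  shows "[diag_coord \<sigma> (Hg_next g a) = diag_coord \<sigma> a + \<sigma>] (mod int g)"
proof -
  obtain i j where a: "a = (i, j)" "j < g div 2"
    using assms(3) by (auto simp: Hg_V_def)
  show ?thesis
  proof (cases "j + 1 < g div 2")
    case True
    then show ?thesis
      using a by (simp add: Hg_next_def diag_coord_def algebra_simps)
  next
    case False
    then have "int (g div 2) = int j + 1"
      using a by simp
    then have "diag_coord \<sigma> a + \<sigma> = int i + \<sigma> * int (g div 2)"
      using a by (simp add: diag_coord_def algebra_simps)
    moreover have "[int i + int (g div 2) = int i + \<sigma> * int (g div 2)] (mod int g)"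
    proof -
      have "int g = 2 * int (g div 2)"
        using assms(1) by auto
      then show ?thesis
        using assms(2) by (auto simp: cong_iff_lin algebra_simps intro: exI[of _ "-1"])
    qed
    moreover have "diag_coord \<sigma> (Hg_next g a) = int ((i + g div 2) mod g)"
      using a False by (simp add: Hg_next_def diag_coord_def)
    ultimately show ?thesis
      by (simp add: cong_def of_nat_mod)
  qed
qed

definition Hg_shift :: "nat \<Rightarrow> int \<Rightarrow> (nat \<times> nat) step \<Rightarrow> nat \<times> nat \<Rightarrow> nat \<times> nat \<Rightarrow> int" where
  "Hg_shift g \<sigma> s u v =
     (case s of EdgeStep _ \<Rightarrow> if v = Hg_rot g u then 1 else -1 | ArcStep _ \<Rightarrow> \<sigma>)"

lemma Hg_step_diag_coord_shift:
  assumes "even g" "2 \<le> g" "\<sigma> \<in> {1, -1}" "step_ok (Hg_E g) (Hg_A g) s u v"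
  shows "[diag_coord \<sigma> v = diag_coord \<sigma> u + Hg_shift g \<sigma> s u v] (mod int g)"
proof (cases s)
  case (EdgeStep e)
  then obtain a where "{u, v} = {a, Hg_rot g a}"
    using assms(4) by (auto simp: Hg_E_eq)
  then consider "v = Hg_rot g u" | "u = Hg_rot g v" "v \<noteq> Hg_rot g u"
    by (auto simp: doubleton_eq_iff)
  then show ?thesis
  proof cases
    case 1
    then show ?thesis
      using EdgeStep diag_coord_Hg_rot by (simp add: Hg_shift_def)
  next
    case 2
    then have "[diag_coord \<sigma> u - 1 = diag_coord \<sigma> v] (mod int g)"
      using cong_diff[OF diag_coord_Hg_rot[of \<sigma> g v] cong_refl[of 1]] by simp
    then show ?thesis
      using EdgeStep 2 by (simp add: Hg_shift_def cong_sym)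
  qed
next
  case (ArcStep p)
  then obtain a where "a \<in> Hg_V g" "u = a" "v = Hg_next g a"
    using assms(2,4) by (auto simp: Hg_A_eq)
  then show ?thesis
    using ArcStep diag_coord_Hg_next[OF assms(1,3)] by (simp add: Hg_shift_def)
qed

lemma abs_Hg_shift: "\<sigma> \<in> {1, -1} \<Longrightarrow> \<bar>Hg_shift g \<sigma> s u v\<bar> = 1"
  by (auto simp: Hg_shift_def split: step.split)

lemma Hg_short_cycle_shift_sum:
  assumes "even g" "2 \<le> g" "\<sigma> \<in> {1, -1}"
    and cycle: "is_cycle (Hg_V g) (Hg_E g) (Hg_A g) vs ss" and short: "length vs < g"
  shows "(\<Sum>i<length vs. Hg_shift g \<sigma> (ss ! i) (vs ! i) (vs ! ((i + 1) mod length vs))) = 0"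
    (is "sum ?d _ = 0")
proof (rule cong_0_less_modulus_imp_eq_0)
  show "[sum ?d {..<length vs} = 0] (mod int g)"
    using cycle Hg_step_diag_coord_shift[OF assms(1-3)]
    by (intro cong_sum_cyclic_increments[where f = "\<lambda>i. diag_coord \<sigma> (vs ! i)"]) (simp add: is_cycle_def)
  have "\<bar>sum ?d {..<length vs}\<bar> \<le> (\<Sum>i<length vs. \<bar>?d i\<bar>)"
    by (rule sum_abs)
  also have "\<dots> = int (length vs)"
    using abs_Hg_shift[OF assms(3)] by simp
  finally show "\<bar>sum ?d {..<length vs}\<bar> < int g"
    using short by simp
qed

lemma Hg_short_cycle_edges_only:
  assumes "even g" "2 \<le> g" "is_cycle (Hg_V g) (Hg_E g) (Hg_A g) vs ss" "length vs < g" "i < length vs"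
  shows "ss ! i \<in> range EdgeStep"
proof -
  define arcs where "arcs k = Hg_shift g 1 (ss ! k) (vs ! k) (vs ! ((k + 1) mod length vs))
    - Hg_shift g (-1) (ss ! k) (vs ! k) (vs ! ((k + 1) mod length vs))" for k
  have arcs_cases: "arcs k = (case ss ! k of EdgeStep _ \<Rightarrow> 0 | ArcStep _ \<Rightarrow> 2)" for k
    by (simp add: arcs_def Hg_shift_def split: step.split)
  have "(\<Sum>k<length vs. arcs k) = 0"
    using Hg_short_cycle_shift_sum[OF assms(1,2) _ assms(3,4)] by (simp add: arcs_def sum_subtractf)
  moreover have "\<forall>k\<in>{..<length vs}. 0 \<le> arcs k"
    by (simp add: arcs_cases split: step.split)
  ultimately have "arcs i = 0"
    using assms(5) sum_nonneg_eq_0_iff[of "{..<length vs}" arcs] by simp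
  then show ?thesis
    by (auto simp: arcs_cases split: step.splits)
qed

lemma Hg_edge_step_snd:
  assumes "step_ok (Hg_E g) A (EdgeStep e) u v"
  shows "snd v = snd u"
  using assms by (auto simp: Hg_E_eq Hg_rot_def doubleton_eq_iff)

lemma Hg_short_cycle_length_eq_2:
  assumes "even g" "2 \<le> g" and cycle: "is_cycle (Hg_V g) (Hg_E g) (Hg_A g) vs ss"
    and short: "length vs < g"
  shows "length vs = 2"
proof -
  define L where "L = length vs"
  define d where "d i = Hg_shift g 1 (ss ! i) (vs ! i) (vs ! ((i + 1) mod L))" for i
  \<comment> \<open>the cycle stays in one row, and \<open>x\<close> lifts its first coordinate to \<open>\<int>\<close>\<close>
  define x where "x k = diag_coord 1 (vs ! 0) + (\<Sum>i<k. d i)" for k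
  have step: "step_ok (Hg_E g) (Hg_A g) (ss ! i) (vs ! i) (vs ! ((i + 1) mod L))" if "i < L" for i
    using cycle that by (simp add: is_cycle_def L_def)
  have snd_step: "snd (vs ! ((i + 1) mod L)) = snd (vs ! i)" if i: "i < L" for i
  proof -
    obtain e where "ss ! i = EdgeStep e"
      using Hg_short_cycle_edges_only[OF assms] i by (auto simp: L_def)
    then show ?thesis
      using Hg_edge_step_snd step[OF i] by metis
  qed
  have lift: "[x k = diag_coord 1 (vs ! k)] (mod int g) \<and> snd (vs ! k) = snd (vs ! 0)" if "k < L" for k
    using that
  proof (induction k)
    case (Suc k)
    then have "[x k + d k = diag_coord 1 (vs ! k) + d k] (mod int g)"
      by (simp add: cong_add)
    also have "[diag_coord 1 (vs ! k) + d k = diag_coord 1 (vs ! Suc k)] (mod int g)"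
      using Hg_step_diag_coord_shift[OF assms(1,2) _ step[of k], of 1] Suc.prems by (simp add: d_def cong_sym)
    finally show ?case
      using Suc snd_step[of k] by (simp add: x_def add.assoc)
  qed (simp add: x_def)
  have "inj_on x {..<L}"
  proof (rule inj_onI)
    fix i j assume "i \<in> {..<L}" "j \<in> {..<L}" "x i = x j"
    then have diag_eq: "[diag_coord 1 (vs ! i) = diag_coord 1 (vs ! j)] (mod int g)"
      and snd_eq: "snd (vs ! i) = snd (vs ! j)"
      using lift[of i] lift[of j] by (auto intro: cong_trans cong_sym)
    have "vs ! i \<in> Hg_V g" "vs ! j \<in> Hg_V g"
      using cycle \<open>i \<in> {..<L}\<close> \<open>j \<in> {..<L}\<close> by (auto simp: is_cycle_def L_def)
    with snd_eq obtain a b a' where ij: "vs ! i = (a, b)" "vs ! j = (a', b)" "a < g" "a' < g"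
      by (cases "vs ! i", cases "vs ! j") (auto simp: Hg_V_def)
    then have "[a = a'] (mod g)"
      using diag_eq by (simp add: diag_coord_def cong_add_rcancel cong_int_iff)
    then have "vs ! i = vs ! j"
      using ij cong_less_imp_eq_nat by auto
    then show "i = j"
      using cycle \<open>i \<in> {..<L}\<close> \<open>j \<in> {..<L}\<close> by (simp add: is_cycle_def L_def nth_eq_iff_index_eq)
  qed
  moreover have "x L = x 0"
    using Hg_short_cycle_shift_sum[OF assms(1,2) _ cycle short, of 1] by (simp add: x_def d_def L_def)
  moreover have "\<bar>x (Suc i) - x i\<bar> = 1" for i
    using abs_Hg_shift[of 1] by (simp add: x_def d_def)
  moreover have "0 < L"
    using cycle by (simp add: is_cycle_def L_def)
  ultimately show ?thesis
    using closed_unit_step_walk_inj_on_length[of L x] by (simp add: L_def)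
qed

lemma Hg_cycle_length_ge:
  assumes "even g" "2 \<le> g" and cycle: "is_cycle (Hg_V g) (Hg_E g) (Hg_A g) vs ss"
  shows "g \<le> length vs"
proof (rule ccontr)
  assume "\<not> g \<le> length vs"
  then have short: "length vs < g" by simp
  then have two: "length vs = 2"
    using Hg_short_cycle_length_eq_2[OF assms] by simp
  have "ss ! i = EdgeStep {vs ! i, vs ! (1 - i)}" if "i < 2" for i
  proof -
    obtain e where "ss ! i = EdgeStep e"
      using Hg_short_cycle_edges_only[OF assms short] two \<open>i < 2\<close> by auto
    then show ?thesis
      using cycle two \<open>i < 2\<close> by (auto simp: is_cycle_def less_2_cases_iff)
  qed
  then have "ss ! 0 = ss ! 1"
    by (simp add: insert_commute)
  then show False
    using cycle two by (simp add: is_cycle_def nth_eq_iff_index_eq)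
qed

lemma Hg_row_cycle:
  assumes "3 \<le> g"
  shows "has_cycle_of_length (Hg_V g) (Hg_E g) (Hg_A g) g"
proof -
  define vs where "vs = map (\<lambda>i. (i, 0::nat)) [0..<g]"
  define ss where "ss = map (\<lambda>a. EdgeStep {a, Hg_rot g a}) vs"
  have vs_V: "set vs \<subseteq> Hg_V g"
    using assms by (auto simp: vs_def Hg_V_def)
  have "distinct vs"
    by (simp add: vs_def distinct_map inj_on_def)
  moreover have "distinct ss"
    using \<open>distinct vs\<close> inj_on_subset[OF inj_on_edges_of_map[OF Hg_rot_rot_neq[OF assms]] vs_V]
    by (simp add: ss_def distinct_map inj_on_def)
  moreover have len: "length vs = g" "length ss = g"
    by (simp_all add: vs_def ss_def)
  moreover have "step_ok (Hg_E g) (Hg_A g) (ss ! i) (vs ! i) (vs ! ((i + 1) mod length vs))"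
    if "i < length vs" for i
    using that vs_V by (auto simp: vs_def ss_def Hg_E_eq Hg_rot_def intro!: image_eqI[where x = "(i, 0)"])
  ultimately have "is_cycle (Hg_V g) (Hg_E g) (Hg_A g) vs ss"
    using vs_V assms by (auto simp: is_cycle_def)
  then show ?thesis
    using len by (auto simp: has_cycle_of_length_def)
qed

theorem lemma6:
  fixes g :: nat
  assumes "even g" and "g \<ge> 4"
  shows "mixed_zrg (Hg_V g) (Hg_E g) (Hg_A g) 1 2 g \<and> card (Hg_V g) = g\<^sup>2 div 2"
proof
  have g: "0 < g" "2 \<le> g" "3 \<le> g"
    using assms(2) by simp_all
  note next_bij = bij_Hg_next[OF g(2)] and rot_bij = bij_Hg_rot[OF g(1)]
  have "mixed_graph (Hg_V g) (Hg_E g) (Hg_A g)"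
    unfolding Hg_E_eq Hg_A_eq[OF g(2)]
    using bij_betw_imp_surj_on[OF next_bij] bij_betw_imp_surj_on[OF rot_bij]
      Hg_next_neq[OF g(2)] Hg_rot_rot_neq[OF g(3)]
    by (intro mixed_graph_of_maps) (simp_all add: Hg_V_eq)
  moreover have "mixed_regular (Hg_V g) (Hg_E g) (Hg_A g) 1 2"
    unfolding Hg_E_eq Hg_A_eq[OF g(2)]
    using next_bij rot_bij Hg_rot_rot_neq[OF g(3)] by (rule mixed_regular_of_bijs)
  moreover have "has_girth (Hg_V g) (Hg_E g) (Hg_A g) g"
    using Hg_row_cycle[OF g(3)] Hg_cycle_length_ge[OF assms(1) g(2)]
    by (auto simp: has_girth_def has_cycle_of_length_def)
  ultimately show "mixed_zrg (Hg_V g) (Hg_E g) (Hg_A g) 1 2 g"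
    by (simp add: mixed_zrg_def)
  show "card (Hg_V g) = g\<^sup>2 div 2"
    using assms(1) by (auto simp: card_Hg_V power2_eq_square)
qed

end
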